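(* Let $X$ be finite and $t$ any transition function. Then $t$ is menu invariant, i.e. there exists $\nu\in\Delta(\mathcal{L}(X))$ with $\nu M_A=\nu$ for all $A\in\mathcal{X}_2$, if and only if $t$ satisfies no weak investment: for every investment plan $i$ there exists $\succ\in\mathcal{L}(X)$ with $$\sum_{(A,\succ')\in\mathcal{X}_2\times\mathcal{L}(X)} i(A,\succ')\,t_{\succ'}(M(\succ,A),\succ)\le\sum_{A\in\mathcal{X}_2}i(A,\succ).$$
   Context: $\mathcal{X}_2$ is the collection of subsets of $X$ with at least two elements, $\mathcal{L}(X)$ the linear orders on $X$, $M(\succ,A)$ the $\succ$-maximal element of $A$. A transition function is $t:X\times\mathcal{L}(X)\to\Delta(\mathcal{L}(X))$, with $t_{\succ'}(x,\succ)$ the probability of $\succ'$ under $t(x,\succ)$. For $A\in\mathcal{X}_2$, $M_A$ is the Markov matrix on $\mathcal{L}(X)$ with entries $m_A(\succ,\succ')=t_{\succ'}(M(\succ,A),\succ)$; distributions are row vectors. An investment plan is any function $i:\mathcal{X}_2\times\mathcal{L}(X)\to\mathbb{R}_{\ge0}$. *)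

theory Defs
  imports "HOL-Probability.Probability"
begin

text \<open>Linear orders on X (a finite type 'a), as strict linear orders;
  (x, y) \<in> r means x \<succ> y.\<close>
definition linorders :: "'a rel set" where
  "linorders = {r. strict_linear_order r}"

definition menus2 :: "'a set set" where
  "menus2 = {A. 2 \<le> card A}"

definition maxel :: "'a rel \<Rightarrow> 'a set \<Rightarrow> 'a" where
  "maxel r A = (THE x. x \<in> A \<and> (\<forall>y\<in>A. y \<noteq> x \<longrightarrow> (x, y) \<in> r))"

definition transition_fun :: "('a \<Rightarrow> 'a rel \<Rightarrow> 'a rel pmf) \<Rightarrow> bool" where
  "transition_fun t = (\<forall>x r. r \<in> linorders \<longrightarrow> set_pmf (t x r) \<subseteq> linorders)"

definition markov_entry :: "('a \<Rightarrow> 'a rel \<Rightarrow> 'a rel pmf) \<Rightarrow> 'a set \<Rightarrow> 'a rel \<Rightarrow> 'a rel \<Rightarrow> real" where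
  "markov_entry t A r r' = pmf (t (maxel r A) r) r'"

definition menu_invariant :: "('a \<Rightarrow> 'a rel \<Rightarrow> 'a rel pmf) \<Rightarrow> bool" where
  "menu_invariant t = (\<exists>\<nu> :: 'a rel pmf. set_pmf \<nu> \<subseteq> linorders \<and>
     (\<forall>A\<in>menus2. \<forall>r'\<in>linorders.
        (\<Sum>r\<in>linorders. pmf \<nu> r * markov_entry t A r r') = pmf \<nu> r'))"

definition investment_plan :: "('a set \<Rightarrow> 'a rel \<Rightarrow> real) \<Rightarrow> bool" where
  "investment_plan i = (\<forall>A\<in>menus2. \<forall>r\<in>linorders. 0 \<le> i A r)"

definition no_weak_investment :: "('a \<Rightarrow> 'a rel \<Rightarrow> 'a rel pmf) \<Rightarrow> bool" where
  "no_weak_investment t = (\<forall>i. investment_plan i \<longrightarrow>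
     (\<exists>r\<in>linorders.
        (\<Sum>A\<in>menus2. \<Sum>r'\<in>linorders. i A r' * markov_entry t A r r')
          \<le> (\<Sum>A\<in>menus2. i A r)))"

end

theory Submission
  imports Defs
begin

text \<open>
  Write \<open>net_return i r\<close> for the left-hand side minus the right-hand side of the no weak
  investment inequality at \<open>r\<close>. If \<open>\<nu>\<close> is stationary for every \<open>M\<^sub>A\<close>, the
  \<open>\<nu>\<close>-average of \<open>net_return i\<close> vanishes for every plan \<open>i\<close>, so it cannot be positive
  everywhere. Conversely, this is a theorem of the alternative: the vectors
  \<open>-net_return i\<close> form a convex cone which, under no weak investment, misses the open
  negative orthant. A separating hyperplane yields nonnegative, nonzero weights \<open>\<nu>\<close> under
  which every plan has nonpositive average net return; for the plan investing one unit in
  \<open>(A, r')\<close> this says \<open>(\<nu> M\<^sub>A) r' \<le> \<nu> r'\<close>. Since \<open>M\<^sub>A\<close> is stochastic, both sides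
  have the same total mass, so equality holds, and normalising \<open>\<nu>\<close> gives the distribution.
\<close>

lemma exists_nonpos_if_weighted_sum_nonpos:
  fixes f w :: "'s \<Rightarrow> real"
  assumes "finite L" "\<forall>r\<in>L. 0 \<le> w r" "\<exists>r\<in>L. w r \<noteq> 0" "(\<Sum>r\<in>L. w r * f r) \<le> 0"
  shows "\<exists>r\<in>L. f r \<le> 0"
proof (rule ccontr)
  assume no_nonpos: "\<not> ?thesis"
  obtain r0 where "r0 \<in> L" "w r0 \<noteq> 0"
    using assms(3) by blast
  have f_pos: "\<forall>r\<in>L. 0 < f r"
    using no_nonpos by (meson not_le)
  have "0 < w r0"
    using \<open>r0 \<in> L\<close> \<open>w r0 \<noteq> 0\<close> assms(2) by (simp add: less_le)
  then have "0 < w r0 * f r0"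
    using \<open>r0 \<in> L\<close> f_pos by simp
  moreover have "\<forall>r\<in>L. 0 \<le> w r * f r"
    using assms(2) f_pos by (meson less_imp_le mult_nonneg_nonneg)
  ultimately have "0 < (\<Sum>r\<in>L. w r * f r)"
    by (intro sum_pos2[OF assms(1) \<open>r0 \<in> L\<close>]) auto
  with assms(4) show False
    by simp
qed

lemma pmf_proportional_exists:
  fixes w :: "'a \<Rightarrow> real"
  assumes "finite L" "\<forall>r\<in>L. 0 \<le> w r" "0 < (\<Sum>r\<in>L. w r)"
  shows "\<exists>\<mu>. set_pmf \<mu> \<subseteq> L \<and> (\<forall>r\<in>L. pmf \<mu> r = w r / (\<Sum>r\<in>L. w r))"
proof -
  define f where "f r = (if r \<in> L then w r / (\<Sum>r\<in>L. w r) else 0)" for r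
  have f_nonneg: "0 \<le> f r" for r
    using assms by (simp add: f_def)
  have "(\<integral>\<^sup>+r. ennreal (f r) \<partial>count_space UNIV) = (\<Sum>r\<in>L. ennreal (f r))"
    using assms(1) by (intro nn_integral_count_space') (auto simp: f_def)
  also have "\<dots> = ennreal (\<Sum>r\<in>L. f r)"
    using f_nonneg by (intro sum_ennreal)
  also have "(\<Sum>r\<in>L. f r) = 1"
    using assms(3) by (simp add: f_def sum_divide_distrib[symmetric])
  finally have total: "(\<integral>\<^sup>+r. ennreal (f r) \<partial>count_space UNIV) = 1"
    by simp
  have "set_pmf (embed_pmf f) = {r. f r \<noteq> 0}"
    by (rule set_embed_pmf[OF f_nonneg total])
  also have "\<dots> \<subseteq> L"
    by (auto simp: f_def)
  finally have "set_pmf (embed_pmf f) \<subseteq> L" .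
  moreover have "pmf (embed_pmf f) r = w r / (\<Sum>r\<in>L. w r)" if "r \<in> L" for r
  proof -
    have "pmf (embed_pmf f) r = f r"
      by (rule pmf_embed_pmf[OF f_nonneg total])
    with that show ?thesis
      by (simp add: f_def)
  qed
  ultimately show ?thesis
    by blast
qed

lemma nonneg_if_nonneg_on_ray:
  fixes u v :: real
  assumes "\<And>s. 0 \<le> s \<Longrightarrow> 0 \<le> u + s * v"
  shows "0 \<le> v"
proof (rule ccontr)
  assume "\<not> 0 \<le> v"
  define s where "s = (\<bar>u\<bar> + 1) / - v"
  have "0 \<le> s" "s * v = - (\<bar>u\<bar> + 1)"
    using \<open>\<not> 0 \<le> v\<close> by (simp_all add: s_def divide_nonneg_neg)
  with assms[of s] show False
    by linarith
qed

lemma convex_cone_separation_from_negative_orthant: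
  fixes C :: "(real ^ 'n) set" and L :: "'n set"
  assumes cone: "convex_cone C" and meets: "\<And>c. c \<in> C \<Longrightarrow> \<exists>r\<in>L. 0 \<le> c $ r"
  shows "\<exists>p. (\<forall>r\<in>L. 0 \<le> p r) \<and> (\<exists>r\<in>L. p r \<noteq> 0) \<and> (\<forall>c\<in>C. 0 \<le> (\<Sum>r\<in>L. p r * c $ r))"
proof -
  define N where "N = (\<Inter>r\<in>L. {x :: real ^ 'n. axis r 1 \<bullet> x < 0})"
  define neg_one :: "real ^ 'n" where "neg_one = (\<chi> _. -1)"
  have "convex N"
    unfolding N_def by (intro convex_INT convex_halfspace_lt)
  moreover have "neg_one \<in> N"
    by (simp add: N_def neg_one_def inner_axis')
  moreover have "C \<inter> N = {}"
    using meets by (fastforce simp: N_def inner_axis')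
  moreover have "0 \<in> C"
    using cone by (simp add: convex_cone_iff)
  moreover have "convex C"
    using cone by (simp add: convex_cone_def)
  ultimately obtain a b where "a \<noteq> 0" and aC: "\<And>c. c \<in> C \<Longrightarrow> a \<bullet> c \<le> b"
    and aN: "\<And>x. x \<in> N \<Longrightarrow> b \<le> a \<bullet> x"
    using separating_hyperplane_sets[of C N] by blast
  have "0 \<le> b"
    using aC[OF \<open>0 \<in> C\<close>] by simp
  have a_nonpos_on_C: "a \<bullet> c \<le> 0" if "c \<in> C" for c
  proof -
    have "0 \<le> b + s * - (a \<bullet> c)" if "0 \<le> s" for s
      using aC[of "s *\<^sub>R c"] cone \<open>c \<in> C\<close> that by (simp add: convex_cone_iff)
    then show ?thesis
      using nonneg_if_nonneg_on_ray[of b "- (a \<bullet> c)"] by simp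
  qed
  txt \<open>\<open>N\<close> contains the rays \<open>-1 - s e\<^sub>r\<close> (\<open>s \<ge> 0\<close>), and whole lines in the directions
    \<open>e\<^sub>r\<close> with \<open>r \<notin> L\<close>; as \<open>a\<close> is bounded below on \<open>N\<close>, it is nonpositive and supported on \<open>L\<close>.\<close>
  have in_N: "neg_one - s *\<^sub>R axis r 1 \<in> N" if "0 \<le> s \<or> r \<notin> L" for r s
    using that by (auto simp: N_def inner_axis') (auto simp: neg_one_def axis_def)
  have ray: "0 \<le> a \<bullet> neg_one + s * - (a $ r)" if "0 \<le> s \<or> r \<notin> L" for r s
    using aN[OF in_N[OF that]] \<open>0 \<le> b\<close> by (simp add: inner_diff_right inner_axis)
  have a_nonpos: "a $ r \<le> 0" for r
    using nonneg_if_nonneg_on_ray[of "a \<bullet> neg_one" "- (a $ r)"] ray[of _ r] by simp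
  have off_support: "a $ r = 0" if "r \<notin> L" for r
    using nonneg_if_nonneg_on_ray[of "a \<bullet> neg_one" "a $ r"] ray[of "- s" r for s] a_nonpos[of r] that
    by fastforce
  have support: "a \<bullet> c = (\<Sum>r\<in>L. a $ r * c $ r)" for c
    unfolding inner_vec_def inner_real_def using off_support by (intro sum.mono_neutral_right) auto
  obtain r where "a $ r \<noteq> 0"
    using \<open>a \<noteq> 0\<close> by (metis vec_eq_iff zero_index)
  then have "r \<in> L" "- a $ r \<noteq> 0"
    using off_support by auto
  then show ?thesis
    using a_nonpos a_nonpos_on_C support
    by (intro exI[of _ "\<lambda>r. - a $ r"]) (auto simp: sum_negf)
qed

definition net_return ::
    "('i \<Rightarrow> 's \<Rightarrow> 's \<Rightarrow> real) \<Rightarrow> 'i set \<Rightarrow> 's set \<Rightarrow> ('i \<Rightarrow> 's \<Rightarrow> real) \<Rightarrow> 's \<Rightarrow> real" where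
  "net_return m I L i r = (\<Sum>A\<in>I. \<Sum>r'\<in>L. i A r' * m A r r') - (\<Sum>A\<in>I. i A r)"

definition stochastic_on :: "('i \<Rightarrow> 's \<Rightarrow> 's \<Rightarrow> real) \<Rightarrow> 'i set \<Rightarrow> 's set \<Rightarrow> bool" where
  "stochastic_on m I L \<longleftrightarrow> (\<forall>A\<in>I. \<forall>r\<in>L. (\<Sum>r'\<in>L. m A r r') = 1)"

definition common_stationary ::
    "('i \<Rightarrow> 's \<Rightarrow> 's \<Rightarrow> real) \<Rightarrow> 'i set \<Rightarrow> 's set \<Rightarrow> ('s \<Rightarrow> real) \<Rightarrow> bool" where
  "common_stationary m I L \<nu> \<longleftrightarrow> (\<forall>A\<in>I. \<forall>r'\<in>L. (\<Sum>r\<in>L. \<nu> r * m A r r') = \<nu> r')"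

definition no_weak_investment_on :: "('i \<Rightarrow> 's \<Rightarrow> 's \<Rightarrow> real) \<Rightarrow> 'i set \<Rightarrow> 's set \<Rightarrow> bool" where
  "no_weak_investment_on m I L \<longleftrightarrow>
    (\<forall>i. (\<forall>A\<in>I. \<forall>r\<in>L. 0 \<le> i A r) \<longrightarrow> (\<exists>r\<in>L. net_return m I L i r \<le> 0))"

lemma net_return_add:
  "net_return m I L (\<lambda>A r. i A r + j A r) r = net_return m I L i r + net_return m I L j r"
  by (simp add: net_return_def sum.distrib algebra_simps)

lemma net_return_scale:
  "net_return m I L (\<lambda>A r. c * i A r) r = c * net_return m I L i r"
  by (simp add: net_return_def sum_distrib_left algebra_simps)

lemma net_return_zero: "net_return m I L (\<lambda>A r. 0) r = 0"
  by (simp add: net_return_def)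

lemma net_return_single_investment:
  assumes "finite I" "finite L" "A \<in> I" "r' \<in> L"
  shows "net_return m I L (\<lambda>B s. of_bool (B = A \<and> s = r')) r = m A r r' - of_bool (r = r')"
proof -
  have "(\<Sum>s\<in>L. of_bool (B = A \<and> s = r') * m B r s) = of_bool (B = A) * m A r r'" for B
    using assms by (cases "B = A") simp_all
  then show ?thesis
    using assms by (cases "r = r'") (simp_all add: net_return_def)
qed

lemma weighted_net_return_eq_0:
  assumes "common_stationary m I L \<nu>"
  shows "(\<Sum>r\<in>L. \<nu> r * net_return m I L i r) = 0"
proof -
  have "(\<Sum>r\<in>L. \<nu> r * (\<Sum>A\<in>I. \<Sum>r'\<in>L. i A r' * m A r r'))
      = (\<Sum>r\<in>L. \<Sum>A\<in>I. \<Sum>r'\<in>L. i A r' * (\<nu> r * m A r r'))"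
    by (simp add: sum_distrib_left algebra_simps)
  also have "\<dots> = (\<Sum>A\<in>I. \<Sum>r'\<in>L. \<Sum>r\<in>L. i A r' * (\<nu> r * m A r r'))"
    by (rule trans[OF sum.swap], rule sum.cong[OF refl], rule sum.swap)
  also have "\<dots> = (\<Sum>A\<in>I. \<Sum>r'\<in>L. i A r' * \<nu> r')"
    using assms by (simp add: common_stationary_def flip: sum_distrib_left)
  also have "\<dots> = (\<Sum>r\<in>L. \<nu> r * (\<Sum>A\<in>I. i A r))"
    by (subst sum.swap) (simp add: sum_distrib_left algebra_simps)
  finally show ?thesis
    by (simp add: net_return_def right_diff_distrib sum_subtractf)
qed

lemma exists_nonpos_net_return_if_common_stationary:
  assumes "finite L" "\<forall>r\<in>L. 0 \<le> \<nu> r" "\<exists>r\<in>L. \<nu> r \<noteq> 0" "common_stationary m I L \<nu>"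
  shows "\<exists>r\<in>L. net_return m I L i r \<le> 0"
  by (rule exists_nonpos_if_weighted_sum_nonpos[OF assms(1-3)])
    (simp add: weighted_net_return_eq_0[OF assms(4)])

lemma common_stationary_if_subinvariant:
  assumes "finite L" and stochastic: "stochastic_on m I L"
    and sub: "\<And>A r'. A \<in> I \<Longrightarrow> r' \<in> L \<Longrightarrow> (\<Sum>r\<in>L. \<nu> r * m A r r') \<le> \<nu> r'"
  shows "common_stationary m I L \<nu>"
  unfolding common_stationary_def
proof (intro ballI)
  fix A r' assume "A \<in> I" "r' \<in> L"
  have "(\<Sum>r'\<in>L. \<Sum>r\<in>L. \<nu> r * m A r r') = (\<Sum>r\<in>L. \<nu> r * (\<Sum>r'\<in>L. m A r r'))"
    by (subst sum.swap) (simp add: sum_distrib_left)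
  also have "\<dots> = (\<Sum>r\<in>L. \<nu> r)"
    using stochastic \<open>A \<in> I\<close> by (simp add: stochastic_on_def)
  finally have mass: "(\<Sum>r'\<in>L. \<Sum>r\<in>L. \<nu> r * m A r r') = (\<Sum>r'\<in>L. \<nu> r')" .
  show "(\<Sum>r\<in>L. \<nu> r * m A r r') = \<nu> r'"
    using sum_mono_inv[OF mass sub[OF \<open>A \<in> I\<close>] \<open>r' \<in> L\<close> \<open>finite L\<close>] .
qed

lemma common_stationary_if_no_weak_investment:
  fixes m :: "'i \<Rightarrow> 's::finite \<Rightarrow> 's \<Rightarrow> real"
  assumes "finite I" and stochastic: "stochastic_on m I L"
    and no_weak: "no_weak_investment_on m I L"
  shows "\<exists>\<nu>. (\<forall>r\<in>L. 0 \<le> \<nu> r) \<and> (\<exists>r\<in>L. \<nu> r \<noteq> 0) \<and> common_stationary m I L \<nu>"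
proof -
  define plans :: "('i \<Rightarrow> 's \<Rightarrow> real) set" where "plans = {i. \<forall>A\<in>I. \<forall>r\<in>L. 0 \<le> i A r}"
  define C where "C = (\<lambda>i. \<chi> r. - net_return m I L i r) ` plans"
  have "convex_cone C"
    unfolding convex_cone_iff
  proof (intro conjI ballI allI impI)
    show "0 \<in> C"
      unfolding C_def
      by (rule image_eqI[of _ _ "\<lambda>A r. 0"]) (simp_all add: plans_def net_return_zero vec_eq_iff)
  next
    fix x y assume "x \<in> C" "y \<in> C"
    then obtain i j where "i \<in> plans" "j \<in> plans"
      "x = (\<chi> r. - net_return m I L i r)" "y = (\<chi> r. - net_return m I L j r)"
      by (auto simp: C_def)
    then show "x + y \<in> C"
      unfolding C_def
      by (intro image_eqI[of _ _ "\<lambda>A r. i A r + j A r"]) (auto simp: plans_def net_return_add vec_eq_iff)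
  next
    fix x and c :: real assume "x \<in> C" "0 \<le> c"
    then obtain i where "i \<in> plans" "x = (\<chi> r. - net_return m I L i r)"
      by (auto simp: C_def)
    with \<open>0 \<le> c\<close> show "c *\<^sub>R x \<in> C"
      unfolding C_def
      by (intro image_eqI[of _ _ "\<lambda>A r. c * i A r"]) (auto simp: plans_def net_return_scale vec_eq_iff)
  qed
  moreover have "\<exists>r\<in>L. 0 \<le> c $ r" if "c \<in> C" for c
  proof -
    obtain i where "i \<in> plans" and c: "c = (\<chi> r. - net_return m I L i r)"
      using \<open>c \<in> C\<close> by (auto simp: C_def)
    then obtain r where "r \<in> L" "net_return m I L i r \<le> 0"
      using no_weak \<open>i \<in> plans\<close> unfolding no_weak_investment_on_def plans_def by blast
    then show ?thesis
      using c by auto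
  qed
  ultimately obtain p where p_nonneg: "\<forall>r\<in>L. 0 \<le> p r" and p_nonzero: "\<exists>r\<in>L. p r \<noteq> 0"
    and p_dual: "\<And>c. c \<in> C \<Longrightarrow> 0 \<le> (\<Sum>r\<in>L. p r * c $ r)"
    using convex_cone_separation_from_negative_orthant[of C L] by auto
  have "(\<Sum>r\<in>L. p r * m A r r') \<le> p r'" if "A \<in> I" "r' \<in> L" for A r'
  proof -
    define single :: "'i \<Rightarrow> 's \<Rightarrow> real" where "single B s = of_bool (B = A \<and> s = r')" for B s
    have "single \<in> plans"
      by (simp add: plans_def single_def)
    then have "(\<chi> r. - net_return m I L single r) \<in> C"
      unfolding C_def by (rule imageI)
    then have "0 \<le> (\<Sum>r\<in>L. p r * - net_return m I L single r)"
      using p_dual by fastforce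
    also have "\<dots> = p r' - (\<Sum>r\<in>L. p r * m A r r')"
      using that \<open>finite I\<close> unfolding single_def
      by (simp add: net_return_single_investment algebra_simps sum_subtractf)
    finally show ?thesis
      by simp
  qed
  then have "common_stationary m I L p"
    by (intro common_stationary_if_subinvariant[OF _ stochastic]) auto
  with p_nonneg p_nonzero show ?thesis
    by auto
qed

theorem common_stationary_exists_iff_no_weak_investment:
  fixes m :: "'i \<Rightarrow> 's::finite \<Rightarrow> 's \<Rightarrow> real"
  assumes "finite I" and "stochastic_on m I L"
  shows "(\<exists>\<nu>. (\<forall>r\<in>L. 0 \<le> \<nu> r) \<and> (\<exists>r\<in>L. \<nu> r \<noteq> 0) \<and> common_stationary m I L \<nu>)
    \<longleftrightarrow> no_weak_investment_on m I L"
proof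
  assume "\<exists>\<nu>. (\<forall>r\<in>L. 0 \<le> \<nu> r) \<and> (\<exists>r\<in>L. \<nu> r \<noteq> 0) \<and> common_stationary m I L \<nu>"
  then obtain \<nu> where "\<forall>r\<in>L. 0 \<le> \<nu> r" "\<exists>r\<in>L. \<nu> r \<noteq> 0" "common_stationary m I L \<nu>"
    by blast
  from exists_nonpos_net_return_if_common_stationary[OF finite this]
  show "no_weak_investment_on m I L"
    by (simp add: no_weak_investment_on_def)
next
  assume "no_weak_investment_on m I L"
  then show "\<exists>\<nu>. (\<forall>r\<in>L. 0 \<le> \<nu> r) \<and> (\<exists>r\<in>L. \<nu> r \<noteq> 0) \<and> common_stationary m I L \<nu>"
    by (rule common_stationary_if_no_weak_investment[OF assms])
qed

lemma menu_invariant_iff_common_stationary: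
  fixes t :: "'a::finite \<Rightarrow> 'a rel \<Rightarrow> 'a rel pmf"
  shows "menu_invariant t \<longleftrightarrow> (\<exists>\<nu>. (\<forall>r\<in>linorders. 0 \<le> \<nu> r) \<and> (\<exists>r\<in>linorders. \<nu> r \<noteq> 0)
    \<and> common_stationary (markov_entry t) menus2 linorders \<nu>)"
proof
  assume "menu_invariant t"
  then obtain \<nu> where "set_pmf \<nu> \<subseteq> linorders"
    and "common_stationary (markov_entry t) menus2 linorders (pmf \<nu>)"
    unfolding menu_invariant_def common_stationary_def by blast
  moreover have "\<exists>r\<in>linorders. pmf \<nu> r \<noteq> 0"
    using set_pmf_not_empty[of \<nu>] \<open>set_pmf \<nu> \<subseteq> linorders\<close> by (auto simp: set_pmf_iff)
  ultimately show "\<exists>\<nu>. (\<forall>r\<in>linorders. 0 \<le> \<nu> r) \<and> (\<exists>r\<in>linorders. \<nu> r \<noteq> 0)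
    \<and> common_stationary (markov_entry t) menus2 linorders \<nu>"
    by (auto intro!: exI[of _ "pmf \<nu>"])
next
  assume "\<exists>\<nu>. (\<forall>r\<in>linorders. 0 \<le> \<nu> r) \<and> (\<exists>r\<in>linorders. \<nu> r \<noteq> 0)
    \<and> common_stationary (markov_entry t) menus2 linorders \<nu>"
  then obtain \<nu> r0 where nonneg: "\<forall>r\<in>linorders. 0 \<le> \<nu> r" and "r0 \<in> linorders" "\<nu> r0 \<noteq> 0"
    and stationary: "common_stationary (markov_entry t) menus2 linorders \<nu>"
    by blast
  define S where "S = (\<Sum>r\<in>linorders. \<nu> r)"
  have "0 < \<nu> r0"
    using nonneg \<open>r0 \<in> linorders\<close> \<open>\<nu> r0 \<noteq> 0\<close> by (simp add: less_le)
  then have "0 < S"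
    unfolding S_def using nonneg \<open>r0 \<in> linorders\<close> by (intro sum_pos2[OF finite]) auto
  then obtain \<mu> where "set_pmf \<mu> \<subseteq> linorders" and \<mu>: "\<And>r. r \<in> linorders \<Longrightarrow> pmf \<mu> r = \<nu> r / S"
    using pmf_proportional_exists[OF finite nonneg] unfolding S_def by blast
  moreover have "common_stationary (markov_entry t) menus2 linorders (pmf \<mu>)"
    unfolding common_stationary_def
  proof (intro ballI)
    fix A :: "'a set" and r' :: "'a rel"
    assume "A \<in> menus2" "r' \<in> linorders"
    have "(\<Sum>r\<in>linorders. pmf \<mu> r * markov_entry t A r r')
        = (\<Sum>r\<in>linorders. \<nu> r * markov_entry t A r r') / S"
      using \<mu> by (simp add: sum_divide_distrib)
    also have "\<dots> = \<nu> r' / S"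
      using stationary \<open>A \<in> menus2\<close> \<open>r' \<in> linorders\<close> by (simp add: common_stationary_def)
    finally show "(\<Sum>r\<in>linorders. pmf \<mu> r * markov_entry t A r r') = pmf \<mu> r'"
      using \<mu>[OF \<open>r' \<in> linorders\<close>] by simp
  qed
  ultimately show "menu_invariant t"
    unfolding menu_invariant_def common_stationary_def by blast
qed

lemma no_weak_investment_iff_no_weak_investment_on:
  "no_weak_investment t \<longleftrightarrow> no_weak_investment_on (markov_entry t) menus2 linorders"
  by (simp add: no_weak_investment_def no_weak_investment_on_def investment_plan_def net_return_def)

lemma markov_entry_stochastic:
  fixes t :: "'a::finite \<Rightarrow> 'a rel \<Rightarrow> 'a rel pmf"
  assumes "transition_fun t"
  shows "stochastic_on (markov_entry t) I linorders"
  using assms unfolding stochastic_on_def markov_entry_def transition_fun_def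
  by (auto intro!: sum_pmf_eq_1)

theorem theorem9:
  fixes t :: "'a::finite \<Rightarrow> 'a rel \<Rightarrow> 'a rel pmf"
  assumes "transition_fun t"
  shows "menu_invariant t \<longleftrightarrow> no_weak_investment t"
  unfolding menu_invariant_iff_common_stationary no_weak_investment_iff_no_weak_investment_on
  by (rule common_stationary_exists_iff_no_weak_investment[OF finite markov_entry_stochastic[OF assms]])

end
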